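(* Let $P$ be a $q$-central probability measure on $(\Omega,\mathcal{C})$, let $N\ge1$ and $\gamma\in\mathfrak{S}_N$. For $\lambda\in\mathrm{Sign}_N$ let $\gamma_\lambda$ be the permutation of the set of finite paths from $*$ to $\lambda$ such that $\gamma((\omega_n)_{n=1}^\infty)=(\gamma_\lambda((\omega_n)_{n=1}^N),\omega_{N+1},\dots)$ whenever the edge $\omega_N$ ends at $\lambda$. Then \[\frac{dP\circ\gamma}{dP}=\sum_{\lambda\in\mathrm{Sign}_N}\sum_{\alpha}\frac{w(\gamma_\lambda(\alpha))}{w(\alpha)}1_{C_\alpha},\] where $\alpha$ runs over finite paths from $*$ to $\lambda$. In particular, $r(\Omega,\mathcal{C},P,\mathfrak{S})\subseteq\{q^{2n}\mid n\in\mathbb{Z}\}\cup\{0\}$.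
   Context: Fix $q\in(0,1)$. Gelfand--Tsetlin graph: for $N\ge1$ let $\mathrm{Sign}_N=\{\lambda\in\mathbb{Z}^N\mid \lambda_1\ge\cdots\ge\lambda_N\}$, $\mathrm{Sign}_0=\{*\}$, $|\lambda|=\lambda_1+\cdots+\lambda_N$. For $\mu\in\mathrm{Sign}_{N-1}$, $\lambda\in\mathrm{Sign}_N$ write $\mu\prec\lambda$ if $\lambda_1\ge\mu_1\ge\lambda_2\ge\cdots\ge\mu_{N-1}\ge\lambda_N$ (with $*\prec\lambda$ for all $\lambda\in\mathrm{Sign}_1$). Edges of level $N$ are pairs $[\mu,\lambda]$ with $\mu\prec\lambda$, source $\mu$, range $\lambda$; a path is a sequence of edges with the range of each equal to the source of the next. Weight: $w([\mu,\lambda])=q^{N|\mu|-(N-1)|\lambda|}$ for a level-$N$ edge; $w$ of a finite path is the product of its edge weights. $\dim_q(\lambda)=\sum_\alpha w(\alpha)$ over finite paths $\alpha$ from $*$ to $\lambda$. $\Omega$ is the set of infinite paths from $*$; $C_\alpha=\{\omega\in\Omega\mid\omega_n=e_n,\ n\le N\}$ for a finite path $\alpha=(e_n)_{n=1}^N$ from $*$; $\mathcal{C}$ is generated by cylinder sets. $P$ is $q$-central if $P(C_\alpha)/w(\alpha)=P(\{\omega\mid r(\omega_N)=\lambda\})/\dim_q(\lambda)$ for all $\lambda\in\mathrm{Sign}_N$ and finite paths $\alpha$ from $*$ to $\lambda$. For $\lambda\in\mathrm{Sign}_N$, each permutation $\gamma_0$ of the finite paths from $*$ to $\lambda$ acts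 on $\Omega$ by $\gamma(\omega)=(\gamma_0(\omega_1,\dots,\omega_N),\omega_{N+1},\dots)$ if $\omega_N$ ends at $\lambda$, $\gamma(\omega)=\omega$ otherwise; $\mathfrak{S}_N$ is generated by these for all $\lambda\in\mathrm{Sign}_N$, $\mathfrak{S}=\bigcup_N\mathfrak{S}_N$ ($q$-central measures are $\mathfrak{S}$-quasi-invariant). The full group $[\mathfrak{S}]$ consists of measurable $\gamma$ agreeing pointwise with some element of $\mathfrak{S}$ at each point. The ratio set $r(\Omega,\mathcal{C},P,\mathfrak{S})$ is the set of $r\in[0,\infty)$ such that for every $\epsilon>0$ and $A\in\mathcal{C}$ with $P(A)>0$ there exist $B\in\mathcal{C}$, $\gamma\in[\mathfrak{S}]$ with $P(B)>0$, $B\subseteq A$, $\gamma(B)\subseteq A$ and $|\frac{dP\circ\gamma}{dP}-r|<\epsilon$ a.e. on $B$. *)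

theory Defs
  imports "HOL-Probability.Probability" "HOL-Combinatorics.Permutations"
begin

text \<open>Signatures of length N are int lists; Sign 0 = {[]} plays the role of the root.
An infinite path from the root is represented by its sequence of vertices x 0 = [], x 1, x 2, ...
(edges of the Gelfand--Tsetlin graph are determined by source and range).
A finite path from the root to a signature of length N is represented by its list of vertices
of length N+1.\<close>

definition Sign :: "nat \<Rightarrow> int list set" where
  "Sign N = {l. length l = N \<and> sorted_wrt (\<ge>) l}"

definition prec :: "int list \<Rightarrow> int list \<Rightarrow> bool" where
  "prec mu lam \<longleftrightarrow> length lam = Suc (length mu) \<and>
     (\<forall>i<length mu. lam ! i \<ge> mu ! i \<and> mu ! i \<ge> lam ! Suc i)"

definition wt :: "real \<Rightarrow> nat \<Rightarrow> int list \<Rightarrow> int list \<Rightarrow> real" where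
  "wt q N mu lam = q powi (int N * sum_list mu - (int N - 1) * sum_list lam)"

definition fpaths :: "nat \<Rightarrow> int list \<Rightarrow> int list list set" where
  "fpaths N lam = {xs. length xs = Suc N \<and> xs ! N = lam \<and> (\<forall>n\<le>N. xs ! n \<in> Sign n) \<and>
                       (\<forall>n<N. prec (xs ! n) (xs ! Suc n))}"

definition pw :: "real \<Rightarrow> int list list \<Rightarrow> real" where
  "pw q xs = (\<Prod>n\<in>{1..length xs - 1}. wt q n (xs ! (n - 1)) (xs ! n))"

definition dim_q :: "real \<Rightarrow> nat \<Rightarrow> int list \<Rightarrow> real" where
  "dim_q q N lam = (\<Sum>xs\<in>fpaths N lam. pw q xs)"

definition Omega :: "(nat \<Rightarrow> int list) set" where
  "Omega = {x. \<forall>n. x n \<in> Sign n \<and> prec (x n) (x (Suc n))}"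

definition cyl :: "int list list \<Rightarrow> (nat \<Rightarrow> int list) set" where
  "cyl xs = {x \<in> Omega. \<forall>n<length xs. x n = xs ! n}"

definition cylinders :: "(nat \<Rightarrow> int list) set set" where
  "cylinders = {cyl xs | xs N lam. xs \<in> fpaths N lam}"

definition q_central :: "real \<Rightarrow> (nat \<Rightarrow> int list) measure \<Rightarrow> bool" where
  "q_central q P \<longleftrightarrow> (\<forall>N lam xs. lam \<in> Sign N \<longrightarrow> xs \<in> fpaths N lam \<longrightarrow>
      measure P (cyl xs) / pw q xs = measure P {x \<in> Omega. x N = lam} / dim_q q N lam)"

definition prefix :: "nat \<Rightarrow> (nat \<Rightarrow> int list) \<Rightarrow> int list list" where
  "prefix N x = map x [0..<Suc N]"

definition splice :: "nat \<Rightarrow> int list list \<Rightarrow> (nat \<Rightarrow> int list) \<Rightarrow> (nat \<Rightarrow> int list)" where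
  "splice N xs x = (\<lambda>n. if n \<le> N then xs ! n else x n)"

definition gen :: "nat \<Rightarrow> int list \<Rightarrow> (int list list \<Rightarrow> int list list) \<Rightarrow>
    (nat \<Rightarrow> int list) \<Rightarrow> (nat \<Rightarrow> int list)" where
  "gen N lam \<sigma> x = (if x \<in> Omega \<and> x N = lam then splice N (\<sigma> (prefix N x)) x else x)"

text \<open>S_N: the group generated by the generators (closed under inverses since the
generators are).\<close>
inductive_set SG :: "nat \<Rightarrow> ((nat \<Rightarrow> int list) \<Rightarrow> (nat \<Rightarrow> int list)) set" for N where
  SG_id: "id \<in> SG N"
| SG_step: "g \<in> SG N \<Longrightarrow> lam \<in> Sign N \<Longrightarrow> \<sigma> permutes fpaths N lam \<Longrightarrow>
     gen N lam \<sigma> \<circ> g \<in> SG N"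

definition SGall :: "((nat \<Rightarrow> int list) \<Rightarrow> (nat \<Rightarrow> int list)) set" where
  "SGall = (\<Union>N. SG N)"

definition comp_meas :: "(nat \<Rightarrow> int list) measure \<Rightarrow> ((nat \<Rightarrow> int list) \<Rightarrow> (nat \<Rightarrow> int list))
    \<Rightarrow> (nat \<Rightarrow> int list) measure" where
  "comp_meas P \<gamma> = measure_of (space P) (sets P) (\<lambda>A. emeasure P (\<gamma> ` A))"

definition full_group :: "(nat \<Rightarrow> int list) measure \<Rightarrow> ((nat \<Rightarrow> int list) \<Rightarrow> (nat \<Rightarrow> int list)) set" where
  "full_group M = {\<gamma>. \<gamma> \<in> measurable M M \<and> bij_betw \<gamma> Omega Omega \<and>
      inv_into Omega \<gamma> \<in> measurable M M \<and> (\<forall>x\<in>Omega. \<exists>s\<in>SGall. \<gamma> x = s x)}"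

definition ratio_set :: "(nat \<Rightarrow> int list) measure \<Rightarrow> real set" where
  "ratio_set P = {r. r \<ge> 0 \<and> (\<forall>\<epsilon>>0. \<forall>A\<in>sets P. measure P A > 0 \<longrightarrow>
      (\<exists>B\<in>sets P. \<exists>\<gamma>\<in>full_group P. measure P B > 0 \<and> B \<subseteq> A \<and> \<gamma> ` B \<subseteq> A \<and>
         (AE x in P. x \<in> B \<longrightarrow> \<bar>enn2real (RN_deriv P (comp_meas P \<gamma>) x) - r\<bar> < \<epsilon>)))}"

end

theory Submission
  imports Defs
begin

(* By telescoping, the weight of a path x_0 = *, x_1, ..., x_N = lam is
   q powi (2 (|x_1| + ... + |x_(N-1)|) - (N - 1) |lam|), so two paths to the same lam have weights
   differing by an even power of q, and rerouting the first N edges of a longer path (replacing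
   them by another path to the same vertex) changes its weight by the same factor. Since
   q-centrality makes the measure of a cylinder its weight times a factor depending only on its
   endpoint, P o gamma and the density of the weight ratio agree on the pi-system of cylinders of
   level at least N. An element of the full group acts, on countably many pieces covering Omega,
   as the swap of two paths to the same vertex, so its Radon-Nikodym derivative is a.e. an even
   power of q or 0; every other r >= 0 has a neighbourhood avoiding these values. *)

lemma length_prefix [simp]: "length (prefix N x) = Suc N"
  by (simp add: prefix_def)

lemma nth_prefix [simp]: "n \<le> N \<Longrightarrow> prefix N x ! n = x n"
  by (simp add: prefix_def nth_append less_Suc_eq_le del: upt_Suc)

lemma fpathsD:
  assumes "ws \<in> fpaths N lam"
  shows "length ws = Suc N" "ws ! N = lam" "\<And>n. n \<le> N \<Longrightarrow> ws ! n \<in> Sign n"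
    "\<And>n. n < N \<Longrightarrow> prec (ws ! n) (ws ! Suc n)"
  using assms by (auto simp: fpaths_def)

lemma fpaths_imp_Sign: "ws \<in> fpaths N lam \<Longrightarrow> lam \<in> Sign N"
  using fpathsD(2,3)[of ws N lam] by auto

lemma take_in_fpaths:
  assumes "zs \<in> fpaths M mu" "N \<le> M"
  shows "take (Suc N) zs \<in> fpaths N (zs ! N)"
  using fpathsD[OF assms(1)] assms(2) by (auto simp: fpaths_def)

lemma OmegaD: "x \<in> Omega \<Longrightarrow> x n \<in> Sign n" "x \<in> Omega \<Longrightarrow> prec (x n) (x (Suc n))"
  by (auto simp: Omega_def)

lemma prefix_in_fpaths: "x \<in> Omega \<Longrightarrow> prefix N x \<in> fpaths N (x N)"
  by (auto simp: fpaths_def OmegaD)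

lemma cyl_subset_Omega: "cyl ws \<subseteq> Omega"
  by (auto simp: cyl_def)

lemma in_cyl_prefix: "x \<in> Omega \<Longrightarrow> x \<in> cyl (prefix N x)"
  by (auto simp: cyl_def)

lemma prefix_eq_if_in_cyl: "x \<in> cyl ws \<Longrightarrow> length ws = Suc N \<Longrightarrow> prefix N x = ws"
  by (intro nth_equalityI) (auto simp: cyl_def)

lemma in_cyl_iff_prefix:
  assumes "y \<in> Omega" "length zs = Suc M" "N \<le> M"
  shows "y \<in> cyl zs \<longleftrightarrow> prefix N y = take (Suc N) zs \<and> (\<forall>n. N < n \<and> n \<le> M \<longrightarrow> y n = zs ! n)"
proof
  assume y: "y \<in> cyl zs"
  have "prefix N y = take (Suc N) zs"
    using y assms by (intro nth_equalityI) (auto simp: cyl_def)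
  then show "prefix N y = take (Suc N) zs \<and> (\<forall>n. N < n \<and> n \<le> M \<longrightarrow> y n = zs ! n)"
    using y assms by (auto simp: cyl_def)
next
  assume h: "prefix N y = take (Suc N) zs \<and> (\<forall>n. N < n \<and> n \<le> M \<longrightarrow> y n = zs ! n)"
  have "y n = zs ! n" if "n < Suc M" for n
  proof (cases "n \<le> N")
    case True
    then have "y n = prefix N y ! n" by simp
    also have "\<dots> = zs ! n" using h True by simp
    finally show ?thesis .
  next
    case False then show ?thesis using h that by auto
  qed
  then show "y \<in> cyl zs" using assms by (auto simp: cyl_def)
qed

lemma cyl_nested:
  assumes "length a \<le> length b" "cyl a \<inter> cyl b \<noteq> {}"
  shows "cyl b \<subseteq> cyl a"
proof
  obtain x where x: "x \<in> cyl a" "x \<in> cyl b" using assms(2) by blast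
  fix y assume y: "y \<in> cyl b"
  have "y n = a ! n" if "n < length a" for n
    using that x y assms(1) by (auto simp: cyl_def)
  then show "y \<in> cyl a" using y by (auto simp: cyl_def)
qed

lemma cyl_eq_Union_extensions:
  assumes "ys \<in> fpaths K lam" "K \<le> M"
  shows "cyl ys = \<Union>(cyl ` {zs. (\<exists>mu. zs \<in> fpaths M mu) \<and> take (Suc K) zs = ys})"
proof (intro equalityI subsetI)
  fix x assume x: "x \<in> cyl ys"
  then have "x \<in> Omega" by (auto simp: cyl_def)
  moreover have "take (Suc K) (prefix M x) = ys"
    using x assms fpathsD(1)[OF assms(1)] by (intro nth_equalityI) (auto simp: cyl_def)
  ultimately show "x \<in> \<Union>(cyl ` {zs. (\<exists>mu. zs \<in> fpaths M mu) \<and> take (Suc K) zs = ys})"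
    using prefix_in_fpaths in_cyl_prefix by blast
next
  fix x assume "x \<in> \<Union>(cyl ` {zs. (\<exists>mu. zs \<in> fpaths M mu) \<and> take (Suc K) zs = ys})"
  then obtain zs mu where zs: "zs \<in> fpaths M mu" "take (Suc K) zs = ys" "x \<in> cyl zs" by blast
  have "x n = ys ! n" if "n < length ys" for n
  proof -
    have "n < Suc K" "n < length zs"
      using that fpathsD(1)[OF assms(1)] fpathsD(1)[OF zs(1)] assms(2) by simp_all
    then show ?thesis using zs(2,3) by (auto simp: cyl_def)
  qed
  then show "x \<in> cyl ys" using zs(3) by (auto simp: cyl_def)
qed

lemma infsum_indicator_cyl_level:
  assumes x: "x \<in> Omega"
  shows "(\<Sum>\<^sub>\<infinity>(lam, xs)\<in>{(lam, xs). lam \<in> Sign N \<and> xs \<in> fpaths N lam}.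
            f lam xs * indicator (cyl xs) x) = (f (x N) (prefix N x) :: real)"
proof -
  let ?S = "{(lam, xs). lam \<in> Sign N \<and> xs \<in> fpaths N lam}"
  let ?f = "\<lambda>(lam, xs). f lam xs * indicator (cyl xs) x"
  have "infsum ?f ?S = infsum ?f {(x N, prefix N x)}"
  proof (rule infsum_cong_neutral)
    fix p assume "p \<in> ?S - {(x N, prefix N x)}"
    then obtain lam xs where p: "p = (lam, xs)" "xs \<in> fpaths N lam" "(lam, xs) \<noteq> (x N, prefix N x)"
      by auto
    have "x \<notin> cyl xs"
    proof
      assume "x \<in> cyl xs"
      then have "prefix N x = xs" using prefix_eq_if_in_cyl fpathsD(1)[OF p(2)] by blast
      moreover from this have "x N = lam" using fpathsD(2)[OF p(2)] nth_prefix[of N N x] by simp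
      ultimately show False using p(3) by simp
    qed
    then show "?f p = 0" using p by simp
  qed (use OmegaD(1)[OF x] prefix_in_fpaths[OF x] in auto)
  then show ?thesis using in_cyl_prefix[OF x] by simp
qed

lemma splice_in_Omega:
  assumes "ws \<in> fpaths N (x N)" "x \<in> Omega"
  shows "splice N ws x \<in> Omega"
proof -
  have "splice N ws x n \<in> Sign n \<and> prec (splice N ws x n) (splice N ws x (Suc n))" for n
  proof (cases "n < N")
    case True then show ?thesis using fpathsD[OF assms(1)] by (auto simp: splice_def)
  next
    case False
    then show ?thesis using fpathsD[OF assms(1)] OmegaD[OF assms(2)]
      by (cases "n = N") (auto simp: splice_def)
  qed
  then show ?thesis by (auto simp: Omega_def)
qed

lemma prefix_splice: "length ws = Suc N \<Longrightarrow> prefix N (splice N ws x) = ws"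
  by (intro nth_equalityI) (auto simp: splice_def)

lemma splice_at_level: "ws \<in> fpaths N lam \<Longrightarrow> splice N ws x N = lam"
  by (auto simp: splice_def fpaths_def)

lemma splice_beyond: "N < n \<Longrightarrow> splice N ws x n = x n"
  by (auto simp: splice_def)

lemma splice_prefix: "splice N (prefix N x) x = x"
  by (auto simp: splice_def fun_eq_iff)

lemma splice_splice: "splice N a (splice N b x) = splice N a x"
  by (auto simp: splice_def fun_eq_iff)

definition perm_family :: "nat \<Rightarrow> (int list \<Rightarrow> int list list \<Rightarrow> int list list) \<Rightarrow> bool" where
  "perm_family N g \<longleftrightarrow> (\<forall>lam. g lam permutes fpaths N lam)"

definition reroute ::
    "nat \<Rightarrow> (int list \<Rightarrow> int list list \<Rightarrow> int list list) \<Rightarrow> (nat \<Rightarrow> int list) \<Rightarrow> (nat \<Rightarrow> int list)" where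
  "reroute N g x = (if x \<in> Omega then splice N (g (x N) (prefix N x)) x else x)"

definition reroute_path ::
    "nat \<Rightarrow> (int list \<Rightarrow> int list list \<Rightarrow> int list list) \<Rightarrow> int list list \<Rightarrow> int list list" where
  "reroute_path N g zs = g (zs ! N) (take (Suc N) zs) @ drop (Suc N) zs"

lemma perm_family_in: "perm_family N g \<Longrightarrow> ws \<in> fpaths N lam \<Longrightarrow> g lam ws \<in> fpaths N lam"
  by (simp add: perm_family_def permutes_in_image)

lemma perm_family_inv: "perm_family N g \<Longrightarrow> perm_family N (\<lambda>l. inv (g l))"
  unfolding perm_family_def by (blast intro: permutes_inv)

lemma perm_family_inv_inv: "perm_family N g \<Longrightarrow> (\<lambda>l. inv (inv (g l))) = g"
  unfolding perm_family_def fun_eq_iff by (metis permutes_inv_inv)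

lemma perm_family_inverses:
  assumes "perm_family N g"
  shows "inv (g l) (g l a) = a" "g l (inv (g l) a) = a"
  using assms permutes_inverses unfolding perm_family_def by metis+

lemma rerouted_prefix_in_fpaths:
  "perm_family N g \<Longrightarrow> x \<in> Omega \<Longrightarrow> g (x N) (prefix N x) \<in> fpaths N (x N)"
  by (simp add: perm_family_in prefix_in_fpaths)

lemma reroute_in_Omega: "perm_family N g \<Longrightarrow> x \<in> Omega \<Longrightarrow> reroute N g x \<in> Omega"
  by (simp add: reroute_def splice_in_Omega rerouted_prefix_in_fpaths)

lemma reroute_at_level: "perm_family N g \<Longrightarrow> reroute N g x N = x N"
  by (simp add: reroute_def splice_at_level rerouted_prefix_in_fpaths)

lemma prefix_reroute:
  "perm_family N g \<Longrightarrow> x \<in> Omega \<Longrightarrow> prefix N (reroute N g x) = g (x N) (prefix N x)"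
  by (simp add: reroute_def prefix_splice[OF fpathsD(1)[OF rerouted_prefix_in_fpaths]])

lemma reroute_beyond: "N < n \<Longrightarrow> reroute N g x n = x n"
  by (simp add: reroute_def splice_beyond)

lemma reroute_reroute:
  assumes g: "perm_family N g"
  shows "reroute N h (reroute N g x) = reroute N (\<lambda>l. h l \<circ> g l) x"
proof (cases "x \<in> Omega")
  case True
  then have "reroute N h (reroute N g x) = splice N (h (x N) (g (x N) (prefix N x))) (reroute N g x)"
    by (simp add: reroute_def[of N h] reroute_in_Omega[OF g] reroute_at_level[OF g] prefix_reroute[OF g])
  then show ?thesis using True by (simp add: reroute_def splice_splice)
qed (simp add: reroute_def)

lemma reroute_id: "reroute N (\<lambda>l. id) x = x"
  by (simp add: reroute_def splice_prefix)

lemma reroute_inv_reroute: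
  assumes "perm_family N g"
  shows "reroute N (\<lambda>l. inv (g l)) (reroute N g x) = x"
proof -
  have "(\<lambda>l. inv (g l) \<circ> g l) = (\<lambda>l. id)"
    by (simp add: fun_eq_iff perm_family_inverses[OF assms])
  then show ?thesis by (simp add: reroute_reroute[OF assms] reroute_id)
qed

lemma reroute_reroute_inv:
  assumes "perm_family N g"
  shows "reroute N g (reroute N (\<lambda>l. inv (g l)) x) = x"
proof -
  have "(\<lambda>l. g l \<circ> inv (g l)) = (\<lambda>l. id)"
    by (simp add: fun_eq_iff perm_family_inverses[OF assms])
  then show ?thesis by (simp add: reroute_reroute[OF perm_family_inv[OF assms]] reroute_id)
qed

lemma image_reroute:
  assumes g: "perm_family N g" and "A \<subseteq> Omega"
  shows "reroute N g ` A = reroute N (\<lambda>l. inv (g l)) -` A \<inter> Omega"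
proof (intro equalityI subsetI)
  fix y assume "y \<in> reroute N g ` A"
  then show "y \<in> reroute N (\<lambda>l. inv (g l)) -` A \<inter> Omega"
    using assms reroute_inv_reroute[OF g] reroute_in_Omega[OF g] by auto
next
  fix y assume "y \<in> reroute N (\<lambda>l. inv (g l)) -` A \<inter> Omega"
  then show "y \<in> reroute N g ` A"
    using reroute_reroute_inv[OF g, of y, symmetric] by blast
qed

lemma nth_reroute_path:
  assumes g: "perm_family N g" and zs: "zs \<in> fpaths M mu" and "N \<le> M" "n \<le> M"
  shows "reroute_path N g zs ! n = (if n \<le> N then g (zs ! N) (take (Suc N) zs) ! n else zs ! n)"
proof -
  have "length (g (zs ! N) (take (Suc N) zs)) = Suc N"
    using fpathsD(1) perm_family_in[OF g take_in_fpaths[OF zs \<open>N \<le> M\<close>]] .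
  then show ?thesis using assms fpathsD(1)[OF zs] by (simp add: reroute_path_def nth_append)
qed

lemma nth_reroute_path_ge:
  assumes g: "perm_family N g" and zs: "zs \<in> fpaths M mu" and "N \<le> n" "n \<le> M"
  shows "reroute_path N g zs ! n = zs ! n"
proof -
  have "N \<le> M" using assms by simp
  then have "g (zs ! N) (take (Suc N) zs) ! N = zs ! N"
    using fpathsD(2)[OF perm_family_in[OF g take_in_fpaths[OF zs]]] by simp
  then show ?thesis using nth_reroute_path[OF g zs \<open>N \<le> M\<close>] assms by simp
qed

lemma length_reroute_path:
  assumes g: "perm_family N g" and zs: "zs \<in> fpaths M mu" and NM: "N \<le> M"
  shows "length (reroute_path N g zs) = Suc M"
  using fpathsD(1)[OF perm_family_in[OF g take_in_fpaths[OF zs NM]]] fpathsD(1)[OF zs] NM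
  by (simp add: reroute_path_def)

lemma take_reroute_path:
  assumes g: "perm_family N g" and zs: "zs \<in> fpaths M mu" and NM: "N \<le> M"
  shows "take (Suc N) (reroute_path N g zs) = g (zs ! N) (take (Suc N) zs)"
  using fpathsD(1)[OF perm_family_in[OF g take_in_fpaths[OF zs NM]]]
  by (simp add: reroute_path_def)

lemma reroute_path_in_fpaths:
  assumes g: "perm_family N g" and zs: "zs \<in> fpaths M mu" and NM: "N \<le> M"
  shows "reroute_path N g zs \<in> fpaths M mu"
proof -
  let ?u = "g (zs ! N) (take (Suc N) zs)"
  note Z = fpathsD[OF zs] and U = fpathsD[OF perm_family_in[OF g take_in_fpaths[OF zs NM]]]
  note low = nth_reroute_path[OF g zs NM] and high = nth_reroute_path_ge[OF g zs]
  have "reroute_path N g zs ! n \<in> Sign n" if "n \<le> M" for n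
    using that low U(3) Z(3) by (cases "n \<le> N") auto
  moreover have "prec (reroute_path N g zs ! n) (reroute_path N g zs ! Suc n)" if "n < M" for n
    using that low high U(4) Z(4) NM by (cases "n < N") auto
  ultimately show ?thesis
    using high[of M] NM Z(2) length_reroute_path[OF g zs NM] by (auto simp: fpaths_def)
qed

lemma reroute_in_cyl_reroute_path:
  assumes g: "perm_family N g" and zs: "zs \<in> fpaths M mu" and NM: "N \<le> M" and x: "x \<in> cyl zs"
  shows "reroute N g x \<in> cyl (reroute_path N g zs)"
proof -
  have xO: "x \<in> Omega" using x cyl_subset_Omega by blast
  have c: "prefix N x = take (Suc N) zs" "\<forall>n. N < n \<and> n \<le> M \<longrightarrow> x n = zs ! n"
    using x in_cyl_iff_prefix[OF xO fpathsD(1)[OF zs] NM] by auto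
  have "x N = zs ! N" using c(1) NM nth_prefix[of N N x] by simp
  then show ?thesis
    using in_cyl_iff_prefix[OF reroute_in_Omega[OF g xO] length_reroute_path[OF g zs NM] NM] c
      take_reroute_path[OF g zs NM] nth_reroute_path_ge[OF g zs] prefix_reroute[OF g xO]
      reroute_beyond
    by auto
qed

lemma reroute_path_inv_reroute_path:
  assumes g: "perm_family N g" and zs: "zs \<in> fpaths M mu" and NM: "N \<le> M"
  shows "reroute_path N (\<lambda>l. inv (g l)) (reroute_path N g zs) = zs"
proof -
  have "length (g (zs ! N) (take (Suc N) zs)) = Suc N"
    using fpathsD(1)[OF perm_family_in[OF g take_in_fpaths[OF zs NM]]] .
  then show ?thesis
    using take_reroute_path[OF g zs NM] nth_reroute_path_ge[OF g zs order.refl NM]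
    by (simp add: reroute_path_def[of N "\<lambda>l. inv (g l)"] perm_family_inverses[OF g])
      (simp add: reroute_path_def)
qed

lemma image_reroute_cyl:
  assumes g: "perm_family N g" and zs: "zs \<in> fpaths M mu" and NM: "N \<le> M"
  shows "reroute N g ` cyl zs = cyl (reroute_path N g zs)"
proof (intro equalityI subsetI)
  fix y assume "y \<in> cyl (reroute_path N g zs)"
  then have "reroute N (\<lambda>l. inv (g l)) y \<in> cyl zs"
    using reroute_in_cyl_reroute_path[OF perm_family_inv[OF g] reroute_path_in_fpaths[OF g zs NM] NM]
    by (simp add: reroute_path_inv_reroute_path[OF g zs NM])
  then show "y \<in> reroute N g ` cyl zs"
    using reroute_reroute_inv[OF g, of y] by (metis imageI)
qed (use reroute_in_cyl_reroute_path[OF g zs NM] in blast)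

lemma pw_pos: "0 < q \<Longrightarrow> 0 < pw q xs"
  by (simp add: pw_def wt_def prod_pos)

lemma prod_power_int_sum:
  fixes q :: "'a :: field"
  shows "finite A \<Longrightarrow> q \<noteq> 0 \<Longrightarrow> (\<Prod>i\<in>A. q powi f i) = q powi (\<Sum>i\<in>A. f i)"
  by (induction A rule: finite_induct) (simp_all add: power_int_add)

lemma sum_weight_exponents_telescope:
  "(\<Sum>n\<in>{1..N}. int n * a (n - 1) - (int n - 1) * a n)
     = 2 * (\<Sum>m<N. a m) - a 0 - (int N - 1) * (a N :: int)"
  by (induction N) (simp_all add: algebra_simps)

lemma pw_eq_power_int:
  assumes "0 < q" "length ws = Suc N"
  shows "pw q ws = q powi (2 * (\<Sum>m<N. sum_list (ws ! m)) - sum_list (ws ! 0)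
                             - (int N - 1) * sum_list (ws ! N))"
proof -
  have "pw q ws = q powi (\<Sum>n\<in>{1..N}. int n * sum_list (ws ! (n - 1)) - (int n - 1) * sum_list (ws ! n))"
    using assms by (simp add: pw_def wt_def prod_power_int_sum)
  then show ?thesis
    using sum_weight_exponents_telescope[where N=N and a="\<lambda>m. sum_list (ws ! m)"] by simp
qed

lemma pw_divide_even_power:
  assumes "0 < q" "ws \<in> fpaths N lam" "vs \<in> fpaths N lam"
  shows "\<exists>k::int. pw q vs / pw q ws = q powi (2 * k)"
proof -
  have "ws ! 0 = vs ! 0" using fpathsD(3)[OF assms(2), of 0] fpathsD(3)[OF assms(3), of 0]
    by (simp add: Sign_def)
  moreover have "ws ! N = vs ! N" using fpathsD(2) assms by metis
  ultimately have "pw q vs / pw q ws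
      = q powi (2 * ((\<Sum>m<N. sum_list (vs ! m)) - (\<Sum>m<N. sum_list (ws ! m))))"
    using assms fpathsD(1)
    by (simp add: pw_eq_power_int power_int_diff[symmetric] algebra_simps)
  then show ?thesis by blast
qed

lemma pw_take_mult:
  assumes "length ws = Suc M" "N \<le> M"
  shows "pw q ws = pw q (take (Suc N) ws) * (\<Prod>n\<in>{Suc N..M}. wt q n (ws ! (n - 1)) (ws ! n))"
proof -
  have "{1..M} = {1..N} \<union> {Suc N..M}" using assms by auto
  then have "pw q ws = (\<Prod>n\<in>{1..N}. wt q n (ws ! (n - 1)) (ws ! n))
                       * (\<Prod>n\<in>{Suc N..M}. wt q n (ws ! (n - 1)) (ws ! n))"
    using assms by (simp add: pw_def prod.union_disjoint[symmetric] ivl_disj_int)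
  moreover have "pw q (take (Suc N) ws) = (\<Prod>n\<in>{1..N}. wt q n (ws ! (n - 1)) (ws ! n))"
    using assms by (auto simp: pw_def min_def intro!: prod.cong)
  ultimately show ?thesis by simp
qed

lemma pw_reroute_path_divide:
  assumes q: "0 < q" and g: "perm_family N g" and zs: "zs \<in> fpaths M mu" and NM: "N \<le> M"
  shows "pw q (reroute_path N g zs) / pw q zs
           = pw q (g (zs ! N) (take (Suc N) zs)) / pw q (take (Suc N) zs)"
proof -
  define T where "T ws = (\<Prod>n\<in>{Suc N..M}. wt q n (ws ! (n - 1)) (ws ! n))" for ws
  have "T (reroute_path N g zs) = T zs"
    unfolding T_def using nth_reroute_path_ge[OF g zs] by (intro prod.cong) auto
  moreover have "0 < T zs" unfolding T_def wt_def using q by (intro prod_pos) simp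
  ultimately show ?thesis
    using pw_take_mult[of _ M N q, folded T_def] fpathsD(1)[OF zs] NM
      length_reroute_path[OF g zs NM] take_reroute_path[OF g zs NM]
    by simp
qed

definition weight_ratio ::
    "real \<Rightarrow> nat \<Rightarrow> (int list \<Rightarrow> int list list \<Rightarrow> int list list) \<Rightarrow> (nat \<Rightarrow> int list) \<Rightarrow> real" where
  "weight_ratio q N g x = pw q (g (x N) (prefix N x)) / pw q (prefix N x)"

lemma weight_ratio_on_cyl:
  assumes "0 < q" "perm_family N g" "zs \<in> fpaths M mu" "N \<le> M" "x \<in> cyl zs"
  shows "weight_ratio q N g x = pw q (reroute_path N g zs) / pw q zs"
proof -
  have "prefix N x = take (Suc N) zs"
    using assms(5) in_cyl_iff_prefix[of x zs M N] cyl_subset_Omega fpathsD(1)[OF assms(3)] assms(4)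
    by blast
  moreover from this have "x N = zs ! N" using assms(4) nth_prefix[of N N x] by simp
  ultimately show ?thesis by (simp add: weight_ratio_def pw_reroute_path_divide[OF assms(1-4)])
qed

definition cylinders_from :: "nat \<Rightarrow> (nat \<Rightarrow> int list) set set" where
  "cylinders_from N = insert {} (cyl ` {zs. \<exists>M mu. N \<le> M \<and> zs \<in> fpaths M mu})"

lemma cylinders_from_subset_Pow: "cylinders_from N \<subseteq> Pow Omega"
  by (auto simp: cylinders_from_def cyl_def)

lemma Int_stable_cylinders_from: "Int_stable (cylinders_from N)"
proof (rule Int_stableI)
  fix a b assume a: "a \<in> cylinders_from N" and b: "b \<in> cylinders_from N"
  show "a \<inter> b \<in> cylinders_from N"
  proof (cases "a \<inter> b = {}")
    case False
    then obtain as bs where ab: "a = cyl as" "b = cyl bs"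
      using a b by (auto simp: cylinders_from_def)
    show ?thesis
    proof (cases "length as \<le> length bs")
      case True
      then have "a \<inter> b = b" using cyl_nested[of as bs] False ab by blast
      then show ?thesis using b by simp
    next
      case False
      then have "a \<inter> b = a" using cyl_nested[of bs as] \<open>a \<inter> b \<noteq> {}\<close> ab by auto
      then show ?thesis using a by simp
    qed
  qed (simp add: cylinders_from_def)
qed

lemma sigma_sets_cylinders_from: "sigma_sets Omega (cylinders_from N) = sigma_sets Omega cylinders"
proof (rule sigma_sets_eqI)
  fix a assume "a \<in> cylinders_from N"
  then show "a \<in> sigma_sets Omega cylinders"
    by (auto simp: cylinders_from_def cylinders_def intro: sigma_sets.Basic sigma_sets.Empty)
next
  fix b assume "b \<in> cylinders"
  then obtain ys K lam where b: "b = cyl ys" "ys \<in> fpaths K lam" by (auto simp: cylinders_def)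
  interpret S: sigma_algebra Omega "sigma_sets Omega (cylinders_from N)"
    using cylinders_from_subset_Pow by (rule sigma_algebra_sigma_sets)
  let ?Z = "{zs. (\<exists>mu. zs \<in> fpaths (max K N) mu) \<and> take (Suc K) zs = ys}"
  have "cyl ` ?Z \<subseteq> cylinders_from N"
    by (auto simp: cylinders_from_def intro!: imageI exI[of _ "max K N"])
  then have "\<Union>(cyl ` ?Z) \<in> sigma_sets Omega (cylinders_from N)"
    by (intro S.countable_Union countable_image countableI_type) auto
  then show "b \<in> sigma_sets Omega (cylinders_from N)"
    using cyl_eq_Union_extensions[OF b(2), of "max K N"] b(1) by simp
qed

lemma comp_meas_eqI:
  assumes "\<And>A. A \<in> sets P \<Longrightarrow> emeasure P (\<gamma> ` A) = emeasure M A" "sets M = sets P"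
  shows "comp_meas P \<gamma> = M"
proof -
  have "comp_meas P \<gamma> = measure_of (space P) (sets P) (emeasure M)"
    unfolding comp_meas_def
    by (rule measure_of_eq) (auto simp: sets.space_closed sets.sigma_sets_eq assms(1))
  also have "\<dots> = M" using measure_of_of_measure[of M] sets_eq_imp_space_eq[OF assms(2)] assms(2)
    by simp
  finally show ?thesis .
qed

lemma density_cong_on_space:
  "(\<And>x. x \<in> space M \<Longrightarrow> f x = f' x) \<Longrightarrow> density M f = density M f'"
  unfolding density_def by (auto intro!: measure_of_eq nn_integral_cong sets.space_closed)

locale q_central_prob = prob_space P for P :: "(nat \<Rightarrow> int list) measure" +
  fixes q :: real
  assumes q_pos: "0 < q" and space_P: "space P = Omega"
    and sets_P: "sets P = sigma_sets Omega cylinders" and q_central: "q_central q P"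
begin

lemma cyl_in_sets: "ys \<in> fpaths K lam \<Longrightarrow> cyl ys \<in> sets P"
  unfolding sets_P cylinders_def by (rule sigma_sets.Basic) blast

lemma sets_eq_cylinders_from: "sets P = sigma_sets Omega (cylinders_from N)"
  using sets_P sigma_sets_cylinders_from by simp

lemma level_set_in_sets: "{x \<in> Omega. x n = a} \<in> sets P"
proof -
  have "{x \<in> Omega. x n = a} = \<Union>(cyl ` fpaths n a)"
  proof (intro equalityI subsetI)
    fix x assume "x \<in> {x \<in> Omega. x n = a}"
    then show "x \<in> \<Union>(cyl ` fpaths n a)" using in_cyl_prefix[of x n] prefix_in_fpaths[of x n] by auto
  next
    fix x assume "x \<in> \<Union>(cyl ` fpaths n a)"
    then obtain ws where "ws \<in> fpaths n a" "x \<in> cyl ws" by blast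
    then show "x \<in> {x \<in> Omega. x n = a}" using fpathsD(1,2) by (auto simp: cyl_def)
  qed
  also have "\<dots> \<in> sets P"
    by (rule sets.countable_Union) (auto intro: cyl_in_sets)
  finally show ?thesis .
qed

lemma measure_cyl_eq:
  assumes "ws \<in> fpaths N lam" "vs \<in> fpaths N lam"
  shows "measure P (cyl vs) = pw q vs / pw q ws * measure P (cyl ws)"
proof -
  have "measure P (cyl xs) / pw q xs = measure P {x \<in> Omega. x N = lam} / dim_q q N lam"
    if "xs \<in> fpaths N lam" for xs
    using q_central fpaths_imp_Sign[OF that] that unfolding q_central_def by blast
  then have "measure P (cyl vs) / pw q vs = measure P (cyl ws) / pw q ws" using assms by simp
  then show ?thesis using pw_pos[OF q_pos, of ws] pw_pos[OF q_pos, of vs] by (simp add: field_simps)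
qed

lemma measurable_reroute:
  assumes g: "perm_family N g"
  shows "reroute N g \<in> measurable P P"
proof (rule measurable_sigma_sets[OF sets_eq_cylinders_from cylinders_from_subset_Pow])
  show "reroute N g \<in> space P \<rightarrow> Omega" using reroute_in_Omega[OF g] space_P by auto
  fix y assume "y \<in> cylinders_from N"
  then consider "y = {}" | zs M mu where "y = cyl zs" "zs \<in> fpaths M mu" "N \<le> M"
    unfolding cylinders_from_def by blast
  then show "reroute N g -` y \<inter> space P \<in> sets P"
  proof cases
    case 2
    note g' = perm_family_inv[OF g]
    have "reroute N g -` y \<inter> space P = reroute N (\<lambda>l. inv (g l)) ` cyl zs"
      using image_reroute[OF g' cyl_subset_Omega] 2 space_P by (simp add: perm_family_inv_inv[OF g])
    also have "\<dots> = cyl (reroute_path N (\<lambda>l. inv (g l)) zs)"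
      using image_reroute_cyl[OF g' 2(2,3)] .
    finally show ?thesis
      using cyl_in_sets[OF reroute_path_in_fpaths[OF g' 2(2,3)]] by simp
  qed simp
qed

lemma measurable_prefix: "prefix N \<in> measurable P (count_space UNIV)"
  unfolding measurable_count_space_eq2_countable
proof (intro conjI ballI)
  fix a :: "int list list"
  show "prefix N -` {a} \<inter> space P \<in> sets P"
  proof (cases "\<exists>lam. a \<in> fpaths N lam")
    case True
    then obtain lam where a: "a \<in> fpaths N lam" by blast
    have "prefix N -` {a} \<inter> space P = cyl a"
    proof (intro equalityI subsetI)
      fix x assume "x \<in> prefix N -` {a} \<inter> space P"
      then show "x \<in> cyl a" using in_cyl_prefix[of x N] space_P by auto
    next
      fix x assume x: "x \<in> cyl a"
      then show "x \<in> prefix N -` {a} \<inter> space P"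
        using prefix_eq_if_in_cyl[OF x fpathsD(1)[OF a]] cyl_subset_Omega space_P by auto
    qed
    then show ?thesis using cyl_in_sets[OF a] by simp
  next
    case False
    then have "prefix N -` {a} \<inter> space P = {}" using prefix_in_fpaths space_P by blast
    then show ?thesis by simp
  qed
qed simp

lemma borel_measurable_weight_ratio:
  "(\<lambda>x. ennreal (weight_ratio q N g x)) \<in> borel_measurable P"
proof -
  have "(\<lambda>ws. ennreal (pw q (g (ws ! N) ws) / pw q ws)) \<circ> prefix N \<in> borel_measurable P"
    by (rule measurable_comp[OF measurable_prefix]) simp
  then show ?thesis by (simp add: weight_ratio_def comp_def)
qed

lemma emeasure_image_reroute_cyl:
  assumes g: "perm_family N g" and zs: "zs \<in> fpaths M mu" and NM: "N \<le> M"
  shows "emeasure P (reroute N g ` cyl zs)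
           = emeasure (density P (\<lambda>x. ennreal (weight_ratio q N g x))) (cyl zs)"
proof -
  let ?r = "pw q (reroute_path N g zs) / pw q zs"
  have r: "0 \<le> ?r" using pw_pos[OF q_pos] by (simp add: less_imp_le)
  have "emeasure P (reroute N g ` cyl zs) = ennreal ?r * emeasure P (cyl zs)"
    unfolding image_reroute_cyl[OF g zs NM] emeasure_eq_measure
      measure_cyl_eq[OF zs reroute_path_in_fpaths[OF g zs NM]]
    by (rule ennreal_mult'[OF r])
  also have "\<dots> = (\<integral>\<^sup>+ x. ennreal ?r * indicator (cyl zs) x \<partial>P)"
    using cyl_in_sets[OF zs] by (rule nn_integral_cmult_indicator[symmetric])
  also have "\<dots> = (\<integral>\<^sup>+ x. ennreal (weight_ratio q N g x) * indicator (cyl zs) x \<partial>P)"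
    using weight_ratio_on_cyl[OF q_pos g zs NM]
    by (intro nn_integral_cong) (simp split: split_indicator)
  also have "\<dots> = emeasure (density P (\<lambda>x. ennreal (weight_ratio q N g x))) (cyl zs)"
    using cyl_in_sets[OF zs] borel_measurable_weight_ratio by (simp add: emeasure_density)
  finally show ?thesis .
qed

lemma distr_reroute_inv:
  assumes g: "perm_family N g"
  shows "distr P P (reroute N (\<lambda>l. inv (g l))) = density P (\<lambda>x. ennreal (weight_ratio q N g x))"
proof (rule measure_eqI_generator_eq_countable
    [OF Int_stable_cylinders_from cylinders_from_subset_Pow _ _ _ _ _ countable_image[OF countableI_type]])
  let ?h = "reroute N (\<lambda>l. inv (g l))"
  let ?f = "\<lambda>x. ennreal (weight_ratio q N g x)"
  let ?A = "cyl ` {zs. \<exists>mu. zs \<in> fpaths N mu}"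
  note hm = measurable_reroute[OF perm_family_inv[OF g]]
  show "sets (distr P P ?h) = sigma_sets Omega (cylinders_from N)"
    "sets (density P ?f) = sigma_sets Omega (cylinders_from N)"
    using sets_eq_cylinders_from by simp_all
  show "?A \<subseteq> cylinders_from N" by (auto simp: cylinders_from_def)
  show "\<Union>?A = Omega"
  proof (intro equalityI subsetI)
    fix x assume "x \<in> Omega"
    then show "x \<in> \<Union>?A" using in_cyl_prefix prefix_in_fpaths by blast
  qed (use cyl_subset_Omega in blast)
  show "emeasure (distr P P ?h) a \<noteq> \<infinity>" if "a \<in> ?A" for a
  proof -
    have "a \<in> sets P" using that cyl_in_sets by blast
    then show ?thesis using hm by (simp add: emeasure_distr)
  qed
  fix X assume "X \<in> cylinders_from N"
  then consider "X = {}" | zs M mu where "X = cyl zs" "zs \<in> fpaths M mu" "N \<le> M"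
    unfolding cylinders_from_def by blast
  then show "emeasure (distr P P ?h) X = emeasure (density P ?f) X"
  proof cases
    case 2
    have "?h -` X \<inter> space P = reroute N g ` cyl zs"
      using image_reroute[OF g cyl_subset_Omega] 2(1) space_P by simp
    then show ?thesis
      using 2(1) cyl_in_sets[OF 2(2)] hm emeasure_image_reroute_cyl[OF g 2(2,3)]
      by (simp add: emeasure_distr)
  qed simp
qed

lemma emeasure_image_reroute:
  assumes g: "perm_family N g" and A: "A \<in> sets P"
  shows "emeasure P (reroute N g ` A) = emeasure (density P (\<lambda>x. ennreal (weight_ratio q N g x))) A"
  using image_reroute[OF g] sets.sets_into_space[OF A] A space_P
    measurable_reroute[OF perm_family_inv[OF g]]
  by (simp add: distr_reroute_inv[OF g, symmetric] emeasure_distr)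

lemma comp_meas_eq_density_sum:
  assumes H: "\<forall>lam\<in>Sign N. g lam permutes fpaths N lam \<and>
               (\<forall>x\<in>Omega. x N = lam \<longrightarrow> \<gamma> x = splice N (g lam (prefix N x)) x)"
  shows "comp_meas P \<gamma> = density P (\<lambda>x. ennreal
              (\<Sum>\<^sub>\<infinity>(lam, xs)\<in>{(lam, xs). lam \<in> Sign N \<and> xs \<in> fpaths N lam}.
                  pw q (g lam xs) / pw q xs * indicator (cyl xs) x))"
proof -
  define g' where "g' lam = (if lam \<in> Sign N then g lam else id)" for lam
  have g': "perm_family N g'"
    using H fpaths_imp_Sign by (fastforce simp: perm_family_def g'_def)
  have \<gamma>: "\<gamma> x = reroute N g' x" if "x \<in> Omega" for x
    using H that OmegaD(1)[OF that, of N] by (simp add: reroute_def g'_def)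
  have "comp_meas P \<gamma> = density P (\<lambda>x. ennreal (weight_ratio q N g' x))"
  proof (rule comp_meas_eqI)
    fix A assume A: "A \<in> sets P"
    have "\<gamma> ` A = reroute N g' ` A"
      using \<gamma> sets.sets_into_space[OF A] space_P by (auto intro!: image_cong)
    then show "emeasure P (\<gamma> ` A) = emeasure (density P (\<lambda>x. ennreal (weight_ratio q N g' x))) A"
      using emeasure_image_reroute[OF g' A] by simp
  qed simp
  also have "\<dots> = density P (\<lambda>x. ennreal
              (\<Sum>\<^sub>\<infinity>(lam, xs)\<in>{(lam, xs). lam \<in> Sign N \<and> xs \<in> fpaths N lam}.
                  pw q (g lam xs) / pw q xs * indicator (cyl xs) x))"
  proof (rule density_cong_on_space)
    fix x assume "x \<in> space P"
    then have x: "x \<in> Omega" using space_P by simp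
    then show "ennreal (weight_ratio q N g' x) = ennreal
              (\<Sum>\<^sub>\<infinity>(lam, xs)\<in>{(lam, xs). lam \<in> Sign N \<and> xs \<in> fpaths N lam}.
                  pw q (g lam xs) / pw q xs * indicator (cyl xs) x)"
      using infsum_indicator_cyl_level[OF x, where f="\<lambda>lam xs. pw q (g lam xs) / pw q xs"] OmegaD(1)
      by (simp add: weight_ratio_def g'_def)
  qed
  finally show ?thesis .
qed

end

lemma SG_fixes_level_and_tail:
  assumes "s \<in> SG N" "x \<in> Omega"
  shows "s x \<in> Omega \<and> s x N = x N \<and> (\<forall>n>N. s x n = x n)"
  using assms(1)
proof induction
  case (SG_step g lam \<sigma>)
  let ?y = "g x"
  have y: "?y \<in> Omega" "?y N = x N" "\<forall>n>N. ?y n = x n" using SG_step.IH by auto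
  show ?case
  proof (cases "?y N = lam")
    case True
    have p: "\<sigma> (prefix N ?y) \<in> fpaths N (?y N)"
      using SG_step.hyps(3) prefix_in_fpaths[OF y(1), of N] True by (simp add: permutes_in_image)
    have "(gen N lam \<sigma> \<circ> g) x = splice N (\<sigma> (prefix N ?y)) ?y"
      using True y(1) by (simp add: gen_def)
    then show ?thesis using splice_in_Omega[OF p y(1)] splice_at_level[OF p] splice_beyond y by auto
  qed (use y in \<open>simp add: gen_def\<close>)
qed (use assms(2) in simp)

definition swap_set ::
    "((nat \<Rightarrow> int list) \<Rightarrow> (nat \<Rightarrow> int list)) \<Rightarrow> nat \<Rightarrow> int list list \<Rightarrow> int list list
       \<Rightarrow> (nat \<Rightarrow> int list) set" where
  "swap_set \<gamma> N ws vs = {x \<in> cyl ws. \<gamma> x \<in> cyl vs \<and> (\<forall>n>N. \<gamma> x n = x n)}"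

definition swap_family ::
    "int list \<Rightarrow> int list list \<Rightarrow> int list list \<Rightarrow> int list \<Rightarrow> int list list \<Rightarrow> int list list" where
  "swap_family lam ws vs l = (if l = lam then Transposition.transpose ws vs else id)"

lemma perm_family_swap_family:
  "ws \<in> fpaths N lam \<Longrightarrow> vs \<in> fpaths N lam \<Longrightarrow> perm_family N (swap_family lam ws vs)"
  unfolding perm_family_def swap_family_def using permutes_swap_id by simp

lemma swap_setD:
  assumes x: "x \<in> swap_set \<gamma> N ws vs" and ws: "ws \<in> fpaths N lam"
  shows "x \<in> Omega" "prefix N x = ws" "x N = lam"
proof -
  have "x \<in> cyl ws" using x by (simp add: swap_set_def)
  then show "x \<in> Omega" "prefix N x = ws"
    using cyl_subset_Omega prefix_eq_if_in_cyl fpathsD(1)[OF ws] by blast+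
  then show "x N = lam" using nth_prefix[of N N x] fpathsD(2)[OF ws] by simp
qed

lemma reroute_swap_family_on_swap_set:
  assumes x: "x \<in> swap_set \<gamma> N ws vs" and ws: "ws \<in> fpaths N lam" and vs: "vs \<in> fpaths N lam"
  shows "\<gamma> x = reroute N (swap_family lam ws vs) x"
proof
  fix n show "\<gamma> x n = reroute N (swap_family lam ws vs) x n"
    using x swap_setD[OF x ws] fpathsD(1)[OF vs]
    by (cases "n \<le> N") (auto simp: swap_set_def cyl_def reroute_def splice_def swap_family_def)
qed

lemma weight_ratio_swap_family_on_swap_set:
  assumes "x \<in> swap_set \<gamma> N ws vs" "ws \<in> fpaths N lam"
  shows "weight_ratio q N (swap_family lam ws vs) x = pw q vs / pw q ws"
  using swap_setD[OF assms] by (simp add: weight_ratio_def swap_family_def)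

lemma swap_sets_cover:
  assumes covered: "\<forall>x\<in>Omega. \<exists>s\<in>SGall. \<gamma> x = s x" and x: "x \<in> Omega"
  shows "\<exists>N lam ws vs. ws \<in> fpaths N lam \<and> vs \<in> fpaths N lam \<and> x \<in> swap_set \<gamma> N ws vs"
proof -
  obtain s N where "s \<in> SG N" "\<gamma> x = s x" using covered x by (auto simp: SGall_def)
  then have \<gamma>x: "\<gamma> x \<in> Omega" "\<gamma> x N = x N" "\<forall>n>N. \<gamma> x n = x n"
    using SG_fixes_level_and_tail[OF _ x] by auto
  have "prefix N x \<in> fpaths N (x N)" "prefix N (\<gamma> x) \<in> fpaths N (x N)"
    using prefix_in_fpaths[OF x] prefix_in_fpaths[OF \<gamma>x(1), of N] \<gamma>x(2) by simp_all
  moreover have "x \<in> swap_set \<gamma> N (prefix N x) (prefix N (\<gamma> x))"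
    using \<gamma>x in_cyl_prefix[OF x] in_cyl_prefix[OF \<gamma>x(1)] by (simp add: swap_set_def)
  ultimately show ?thesis by blast
qed

context q_central_prob
begin

lemma swap_set_in_sets:
  assumes \<gamma>: "\<gamma> \<in> measurable P P" and ws: "ws \<in> fpaths N lam" and vs: "vs \<in> fpaths N' lam'"
  shows "swap_set \<gamma> N ws vs \<in> sets P"
proof -
  define G where "G n = {x \<in> Omega. \<gamma> x n = x n}" for n
  have G: "G n \<in> sets P" for n
  proof -
    have "G n = (\<Union>a. {x \<in> Omega. x n = a} \<inter> (\<gamma> -` {y \<in> Omega. y n = a} \<inter> space P))"
      using measurable_space[OF \<gamma>] space_P by (auto simp: G_def)
    also have "\<dots> \<in> sets P"
      using level_set_in_sets measurable_sets[OF \<gamma> level_set_in_sets] by (intro sets.countable_UN) auto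
    finally show ?thesis .
  qed
  have "swap_set \<gamma> N ws vs = cyl ws \<inter> (\<gamma> -` cyl vs \<inter> space P) \<inter> (\<Inter>n\<in>{N<..}. G n)"
    using space_P cyl_subset_Omega[of ws] by (auto simp: swap_set_def G_def)
  also have "\<dots> \<in> sets P"
  proof (rule sets.Int)
    show "cyl ws \<inter> (\<gamma> -` cyl vs \<inter> space P) \<in> sets P"
      using cyl_in_sets[OF ws] measurable_sets[OF \<gamma> cyl_in_sets[OF vs]] by (rule sets.Int)
    show "(\<Inter>n\<in>{N<..}. G n) \<in> sets P" using G by (intro sets.countable_INT) auto
  qed
  finally show ?thesis .
qed

lemma density_on_swap_set:
  assumes \<gamma>: "\<gamma> \<in> measurable P P" and f: "f \<in> borel_measurable P"
    and f_image: "\<And>C. C \<in> sets P \<Longrightarrow> emeasure (density P f) C = emeasure P (\<gamma> ` C)"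
    and ws: "ws \<in> fpaths N lam" and vs: "vs \<in> fpaths N lam"
  shows "AE x in P. x \<in> swap_set \<gamma> N ws vs \<longrightarrow> f x = ennreal (pw q vs / pw q ws)"
proof -
  let ?E = "swap_set \<gamma> N ws vs"
  let ?c = "pw q vs / pw q ws"
  let ?g = "swap_family lam ws vs"
  have E: "?E \<in> sets P" using swap_set_in_sets[OF \<gamma> ws vs] .
  note g = perm_family_swap_family[OF ws vs]
  have "AE x in P. f x * indicator ?E x = ennreal ?c * indicator ?E x"
  proof (rule density_unique_finite_measure)
    fix A assume A: "A \<in> sets P"
    have AE: "A \<inter> ?E \<in> sets P" using A E by simp
    have "(\<integral>\<^sup>+x. f x * indicator ?E x * indicator A x \<partial>P) = (\<integral>\<^sup>+x. f x * indicator (A \<inter> ?E) x \<partial>P)"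
      by (intro nn_integral_cong) (simp split: split_indicator)
    also have "\<dots> = emeasure (density P f) (A \<inter> ?E)"
      using f AE by (simp add: emeasure_density)
    also have "\<dots> = emeasure P (\<gamma> ` (A \<inter> ?E))" using f_image[OF AE] .
    also have "\<gamma> ` (A \<inter> ?E) = reroute N ?g ` (A \<inter> ?E)"
      using reroute_swap_family_on_swap_set[OF _ ws vs] by (intro image_cong) auto
    also have "emeasure P (reroute N ?g ` (A \<inter> ?E))
                 = (\<integral>\<^sup>+x. ennreal (weight_ratio q N ?g x) * indicator (A \<inter> ?E) x \<partial>P)"
      using emeasure_image_reroute[OF g AE] borel_measurable_weight_ratio AE
      by (simp add: emeasure_density)
    also have "\<dots> = (\<integral>\<^sup>+x. ennreal ?c * indicator ?E x * indicator A x \<partial>P)"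
      using weight_ratio_swap_family_on_swap_set[OF _ ws]
      by (intro nn_integral_cong) (auto split: split_indicator)
    finally show "(\<integral>\<^sup>+x. f x * indicator ?E x * indicator A x \<partial>P)
                    = (\<integral>\<^sup>+x. ennreal ?c * indicator ?E x * indicator A x \<partial>P)" .
  qed (use f E in auto)
  then show ?thesis by (rule eventually_mono) auto
qed

lemma emeasure_comp_meas_full_group:
  assumes \<gamma>: "\<gamma> \<in> full_group P" and C: "C \<in> sets P"
  shows "emeasure (comp_meas P \<gamma>) C = emeasure P (\<gamma> ` C)"
proof -
  have bij: "bij_betw \<gamma> Omega Omega" and inv: "inv_into Omega \<gamma> \<in> measurable P P"
    using \<gamma> by (auto simp: full_group_def)
  have image: "\<gamma> ` A = inv_into Omega \<gamma> -` A \<inter> space P" if "A \<in> sets P" for A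
  proof (intro equalityI subsetI)
    fix y assume "y \<in> \<gamma> ` A"
    then obtain x where "x \<in> A" "y = \<gamma> x" by blast
    moreover have "A \<subseteq> Omega" using sets.sets_into_space[OF that] space_P by simp
    ultimately show "y \<in> inv_into Omega \<gamma> -` A \<inter> space P"
      using space_P bij_betw_inv_into_left[OF bij] bij_betw_apply[OF bij] by auto
  next
    fix y assume y: "y \<in> inv_into Omega \<gamma> -` A \<inter> space P"
    then have "y = \<gamma> (inv_into Omega \<gamma> y)" using bij_betw_inv_into_right[OF bij] space_P by auto
    then show "y \<in> \<gamma> ` A" using y by blast
  qed
  have "comp_meas P \<gamma> = distr P P (inv_into Omega \<gamma>)"
    using image inv by (intro comp_meas_eqI) (simp_all add: emeasure_distr)
  then show ?thesis using image[OF C] C inv by (simp add: emeasure_distr)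
qed

lemma AE_density_full_group_even_power:
  assumes \<gamma>: "\<gamma> \<in> full_group P" and f: "f \<in> borel_measurable P"
    and f_image: "\<And>C. C \<in> sets P \<Longrightarrow> emeasure (density P f) C = emeasure P (\<gamma> ` C)"
  shows "AE x in P. \<exists>n. f x = ennreal (q powi (2 * n))"
proof -
  have \<gamma>m: "\<gamma> \<in> measurable P P" and covered: "\<forall>x\<in>Omega. \<exists>s\<in>SGall. \<gamma> x = s x"
    using \<gamma> by (auto simp: full_group_def)
  let ?I = "{(N, ws, vs). \<exists>lam. ws \<in> fpaths N lam \<and> vs \<in> fpaths N lam}"
  have "AE x in P. \<forall>i\<in>?I. case i of (N, ws, vs) \<Rightarrow>
          x \<in> swap_set \<gamma> N ws vs \<longrightarrow> f x = ennreal (pw q vs / pw q ws)"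
    using density_on_swap_set[OF \<gamma>m f f_image] by (subst AE_ball_countable) auto
  then show ?thesis
  proof (rule AE_mp, intro AE_I2 impI)
    fix x assume x: "x \<in> space P"
      and pieces: "\<forall>i\<in>?I. case i of (N, ws, vs) \<Rightarrow>
                     x \<in> swap_set \<gamma> N ws vs \<longrightarrow> f x = ennreal (pw q vs / pw q ws)"
    obtain N lam ws vs where ws: "ws \<in> fpaths N lam" and vs: "vs \<in> fpaths N lam"
      and "x \<in> swap_set \<gamma> N ws vs"
      using swap_sets_cover[OF covered] x space_P by blast
    then have "f x = ennreal (pw q vs / pw q ws)" using pieces by blast
    then show "\<exists>n. f x = ennreal (q powi (2 * n))"
      using pw_divide_even_power[OF q_pos ws vs] by metis
  qed
qed

lemma AE_RN_deriv_full_group: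
  assumes \<gamma>: "\<gamma> \<in> full_group P"
  shows "AE x in P. enn2real (RN_deriv P (comp_meas P \<gamma>) x) \<in> {q powi (2 * n) | n. True} \<union> {0}"
proof (cases "\<exists>f. f \<in> borel_measurable P \<and> density P f = comp_meas P \<gamma>")
  case False
  then have "RN_deriv P (comp_meas P \<gamma>) = (\<lambda>_. 0)" unfolding RN_deriv_def by (rule if_not_P)
  then show ?thesis by simp
next
  case True
  then have "density P (RN_deriv P (comp_meas P \<gamma>)) = comp_meas P \<gamma>" using RN_derivI by blast
  then have "AE x in P. \<exists>n. RN_deriv P (comp_meas P \<gamma>) x = ennreal (q powi (2 * n))"
    using emeasure_comp_meas_full_group[OF \<gamma>]
    by (intro AE_density_full_group_even_power[OF \<gamma>]) simp_all
  then show ?thesis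
  proof (rule eventually_mono)
    fix x assume "\<exists>n. RN_deriv P (comp_meas P \<gamma>) x = ennreal (q powi (2 * n))"
    then obtain n where "enn2real (RN_deriv P (comp_meas P \<gamma>) x) = q powi (2 * n)"
      using q_pos by fastforce
    then show "enn2real (RN_deriv P (comp_meas P \<gamma>) x) \<in> {q powi (2 * n) | n. True} \<union> {0}"
      by blast
  qed
qed

end

lemma even_powers_gap:
  fixes q r :: real
  assumes q: "0 < q" "q < 1" and "0 \<le> r" and r_notin: "r \<notin> {q powi (2 * n) | n. True} \<union> {0}"
  shows "\<exists>\<epsilon>>0. \<forall>v\<in>{q powi (2 * n) | n. True} \<union> {0}. \<epsilon> \<le> \<bar>v - r\<bar>"
proof -
  have r: "0 < r" using assms by auto
  define L where "L = ln q"
  have L: "L < 0" using q by (simp add: L_def)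
  have exp_form: "q powi (2 * n) = exp (real_of_int (2 * n) * L)" for n :: int
    using powr_real_of_int'[of q "2 * n"] q by (simp add: powr_def L_def)
  have anti: "q powi (2 * n) \<le> q powi (2 * m)" if "m \<le> n" for m n :: int
    using that L by (simp add: exp_form mult_right_mono_neg)
  define t where "t = ln r / (2 * L)"
  have tL: "2 * t * L = ln r" using L by (simp add: t_def)
  define k where "k = \<lfloor>t\<rfloor>"
  have k: "real_of_int k \<le> t" "t < real_of_int k + 1" unfolding k_def by linarith+
  have above: "r < q powi (2 * k)"
  proof -
    have "2 * t * L \<le> real_of_int (2 * k) * L" using k L by (simp add: mult_right_mono_neg)
    then have "r \<le> q powi (2 * k)" using tL exp_form[of k] r by (metis exp_ln exp_le_cancel_iff)
    then show ?thesis using r_notin by force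
  qed
  have below: "q powi (2 * (k + 1)) < r"
  proof -
    have "real_of_int (2 * (k + 1)) * L < 2 * t * L" using k L by (simp add: mult_strict_right_mono_neg)
    then show ?thesis using tL exp_form[of "k + 1"] r by (metis exp_ln exp_less_cancel_iff)
  qed
  define \<epsilon> where "\<epsilon> = min (q powi (2 * k) - r) (r - q powi (2 * (k + 1)))"
  have "\<epsilon> \<le> \<bar>q powi (2 * n) - r\<bar>" for n
    using anti[of n k] anti[of "k + 1" n] above below unfolding \<epsilon>_def by (cases "n \<le> k") auto
  moreover have "\<epsilon> \<le> \<bar>0 - r\<bar>"
  proof -
    have "0 < q powi (2 * (k + 1))" using q by simp
    then show ?thesis using r unfolding \<epsilon>_def by (intro min.coboundedI2) simp
  qed
  moreover have "0 < \<epsilon>" using above below by (simp add: \<epsilon>_def)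
  ultimately show ?thesis by blast
qed

context q_central_prob
begin

lemma ratio_set_subset_even_powers:
  assumes "q < 1"
  shows "ratio_set P \<subseteq> {q powi (2 * n) | n. True} \<union> {0}"
proof
  fix r assume r: "r \<in> ratio_set P"
  show "r \<in> {q powi (2 * n) | n. True} \<union> {0}"
  proof (rule ccontr)
    assume not_in: "r \<notin> {q powi (2 * n) | n. True} \<union> {0}"
    have "0 \<le> r" using r by (simp add: ratio_set_def)
    then obtain \<epsilon> where "\<epsilon> > 0" and gap: "\<forall>v\<in>{q powi (2 * n) | n. True} \<union> {0}. \<epsilon> \<le> \<bar>v - r\<bar>"
      using even_powers_gap[OF q_pos assms _ not_in] by blast
    have "Omega \<in> sets P" "measure P Omega > 0" using sets.top[of P] space_P prob_space by simp_all
    then obtain B \<gamma> where B: "B \<in> sets P" "\<gamma> \<in> full_group P" "measure P B > 0"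
      and close: "AE x in P. x \<in> B \<longrightarrow> \<bar>enn2real (RN_deriv P (comp_meas P \<gamma>) x) - r\<bar> < \<epsilon>"
      using r \<open>\<epsilon> > 0\<close> unfolding ratio_set_def by blast
    have "AE x in P. x \<notin> B"
      using close AE_RN_deriv_full_group[OF B(2)]
    proof eventually_elim
      case (elim x)
      show "x \<notin> B"
      proof
        assume "x \<in> B"
        then have "\<bar>enn2real (RN_deriv P (comp_meas P \<gamma>) x) - r\<bar> < \<epsilon>" using elim(1) by blast
        moreover have "\<epsilon> \<le> \<bar>enn2real (RN_deriv P (comp_meas P \<gamma>) x) - r\<bar>" using gap elim(2) by blast
        ultimately show False by simp
      qed
    qed
    moreover have "{x \<in> space P. \<not> x \<notin> B} = B" using sets.sets_into_space[OF B(1)] by auto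
    ultimately have "emeasure P B = 0" using AE_iff_measurable[OF B(1)] by simp
    then show False using B(3) by (simp add: emeasure_eq_measure)
  qed
qed

end

theorem lemma4p1:
  fixes q :: real and P :: "(nat \<Rightarrow> int list) measure"
  assumes "0 < q" and "q < 1"
    and "prob_space P" and "space P = Omega" and "sets P = sigma_sets Omega cylinders"
    and "q_central q P"
  shows "(\<forall>N \<gamma> g. 1 \<le> N \<longrightarrow> \<gamma> \<in> SG N \<longrightarrow>
            (\<forall>lam\<in>Sign N. g lam permutes fpaths N lam \<and>
               (\<forall>x\<in>Omega. x N = lam \<longrightarrow> \<gamma> x = splice N (g lam (prefix N x)) x)) \<longrightarrow>
            comp_meas P \<gamma> = density P (\<lambda>x. ennreal
              (\<Sum>\<^sub>\<infinity>(lam, xs)\<in>{(lam, xs). lam \<in> Sign N \<and> xs \<in> fpaths N lam}.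
                  pw q (g lam xs) / pw q xs * indicator (cyl xs) x)))
         \<and> ratio_set P \<subseteq> {q powi (2 * n) | n. True} \<union> {0}"
proof -
  interpret q_central_prob P q
    using assms by (simp add: q_central_prob_def q_central_prob_axioms_def)
  show ?thesis
    by (intro conjI allI impI ratio_set_subset_even_powers[OF assms(2)])
      (erule comp_meas_eq_density_sum)
qed

end
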